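(* Let $k\in\mathbb C\setminus\mathbb Q$, $n,m\in\mathbb Z_{>0}$, $p_0=n+k^{-1}m$. Let $\alpha\in\mathcal P_{n,m}$ and let $E$ be its $\mathcal E$-equivalence class. Then: 1) $E\subset\mathcal P_{n,m}$. 2) $E$ contains a minimal bipartition $\alpha_m$ and a maximal bipartition $\alpha_M$ such that $\alpha_m\subset\beta\subset\alpha_M$ for every $\beta\in E$. They are characterised within $E$ by the properties $\lambda\cap\theta(\mu)=\emptyset$ (for $\alpha_m=(\lambda,\mu)$) and $\lambda\cup\theta(\mu)=\pi(n,m)$ (for $\alpha_M=(\lambda,\mu)$), respectively. 3) Write $\alpha_m=(\lambda_m,\mu_m)$, $\alpha_M=(\lambda_M,\mu_M)$ and let $\lambda_M\setminus\lambda_m=\nu_1\cup\dots\cup\nu_r$ and $\mu_M\setminus\mu_m=\tau_1\cup\dots\cup\tau_s$ be the decompositions of these skew diagrams into connected components. Then all $\nu_i,\tau_j\subset\pi(n,m)$, $r=s$, and after a reordering $\theta(\nu_i)=\tau_i$ for $i=1,\dots,r$. 4) Every element $\beta\in E$ can be written uniquely in the form $\beta=\alpha_m\cup(\nu_{a_1},\tau_{a_1})\cup\dots\cup(\nu_{a_l},\tau_{a_l})$ with $\{a_1,\dots,a_l\}\subset\{1,\dots,r\}$; conversely every set of this form is a bipartition belonging to $E$. In particular $E$ has exactly $2^r$ elements.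
   Context: Partitions are identified with Young diagrams, i.e. finite sets of boxes $(i,j)\in\mathbb Z_{>0}^2$ ($i$ = row, $j$ = column) closed under moving up or left; a bipartition is a pair $(\lambda,\mu)$ of partitions, with inclusion and set operations (union, intersection, difference) taken componentwise. Connected components of a set of boxes are taken with respect to boxes sharing an edge. For a box $x=(i,j)$, $c(x,a)=(j-1)+k(i-1)+a$, and $b_r(\alpha,k,p_0)=\sum_{x\in\lambda}c(x,0)^{r-1}+(-1)^r\sum_{y\in\mu}c(y,1+k-kp_0)^{r-1}$ for $r\ge1$. Bipartitions are $\mathcal E$-equivalent if all their $b_r$, $r\ge1$, coincide. $\pi(n,m)=\{(i,j):1\le i\le n,1\le j\le m\}$, $\theta(i,j)=(n-i+1,m-j+1)$ on $\pi(n,m)$, and $\mathcal P_{n,m}$ is the set of bipartitions $(\lambda,\mu)$ with $\lambda,\mu\subset\pi(n,m)$. *)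

theory Defs
  imports Complex_Main
begin

type_synonym box = "nat \<times> nat"
type_synonym bipart = "box set \<times> box set"

text \<open>Young diagrams: finite sets of boxes (i,j) with i,j > 0 (i = row, j = column),
closed under moving up or left.\<close>
definition is_partition :: "box set \<Rightarrow> bool" where
  "is_partition L \<longleftrightarrow> finite L \<and> (\<forall>(i,j)\<in>L. i \<ge> 1 \<and> j \<ge> 1) \<and>
     (\<forall>(i,j)\<in>L. (i > 1 \<longrightarrow> (i - 1, j) \<in> L) \<and> (j > 1 \<longrightarrow> (i, j - 1) \<in> L))"

definition is_bipartition :: "bipart \<Rightarrow> bool" where
  "is_bipartition a \<longleftrightarrow> is_partition (fst a) \<and> is_partition (snd a)"

definition bip_le :: "bipart \<Rightarrow> bipart \<Rightarrow> bool" where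
  "bip_le a b \<longleftrightarrow> fst a \<subseteq> fst b \<and> snd a \<subseteq> snd b"

definition bip_union :: "bipart \<Rightarrow> bipart \<Rightarrow> bipart" where
  "bip_union a b = (fst a \<union> fst b, snd a \<union> snd b)"

definition cont :: "complex \<Rightarrow> box \<Rightarrow> complex \<Rightarrow> complex" where
  "cont k x a = of_nat (snd x - 1) + k * of_nat (fst x - 1) + a"

definition bval :: "nat \<Rightarrow> bipart \<Rightarrow> complex \<Rightarrow> complex \<Rightarrow> complex" where
  "bval r a k p0 = (\<Sum>x\<in>fst a. cont k x 0 ^ (r - 1))
      + (-1) ^ r * (\<Sum>y\<in>snd a. cont k y (1 + k - k * p0) ^ (r - 1))"

definition E_equiv :: "complex \<Rightarrow> complex \<Rightarrow> bipart \<Rightarrow> bipart \<Rightarrow> bool" where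
  "E_equiv k p0 a b \<longleftrightarrow> (\<forall>r\<ge>1. bval r a k p0 = bval r b k p0)"

definition E_class :: "complex \<Rightarrow> complex \<Rightarrow> bipart \<Rightarrow> bipart set" where
  "E_class k p0 a = {b. is_bipartition b \<and> E_equiv k p0 a b}"

definition rect :: "nat \<Rightarrow> nat \<Rightarrow> box set" where
  "rect n m = {(i,j). 1 \<le> i \<and> i \<le> n \<and> 1 \<le> j \<and> j \<le> m}"

definition theta :: "nat \<Rightarrow> nat \<Rightarrow> box \<Rightarrow> box" where
  "theta n m x = (n - fst x + 1, m - snd x + 1)"

definition P_nm :: "nat \<Rightarrow> nat \<Rightarrow> bipart set" where
  "P_nm n m = {a. is_bipartition a \<and> fst a \<subseteq> rect n m \<and> snd a \<subseteq> rect n m}"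

definition box_adj :: "box \<Rightarrow> box \<Rightarrow> bool" where
  "box_adj x y \<longleftrightarrow>
     (fst x = fst y \<and> (snd x = snd y + 1 \<or> snd y = snd x + 1)) \<or>
     (snd x = snd y \<and> (fst x = fst y + 1 \<or> fst y = fst x + 1))"

definition connected_in :: "box set \<Rightarrow> box \<Rightarrow> box \<Rightarrow> bool" where
  "connected_in S = (\<lambda>x y. x \<in> S \<and> y \<in> S \<and> box_adj x y)\<^sup>*\<^sup>*"

definition components :: "box set \<Rightarrow> box set set" where
  "components S = {{y \<in> S. connected_in S x y} | x. x \<in> S}"

end

theory Submission
  imports Defs "HOL-Computational_Algebra.Polynomial"
begin

text \<open>
  Since \<open>k\<close> is irrational, a box \<open>(i, j)\<close> is determined by its content \<open>(j - 1) + k (i - 1)\<close>,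
  and the boxes of \<open>\<mu>\<close> enter \<open>b\<^sub>r\<close> through the shifted contents \<open>(m - j) + k (n - i)\<close> of
  the same lattice. The \<open>b\<^sub>r\<close> are the power sums of this signed set of contents, so two
  bipartitions are E-equivalent iff their signed content sets agree. A box outside the
  rectangle cannot cancel against anything, whence \<open>E \<subseteq> P_nm n m\<close>; inside it the shifted
  content of \<open>y\<close> is the content of \<open>\<theta>(y)\<close>. So with \<open>L = \<lambda>\<close>, a down-set, and \<open>T = \<theta>(\<mu>)\<close>, an up-set of
  the rectangle, equivalence fixes \<open>L - T\<close> and \<open>T - L\<close>. The remaining freedom \<open>L \<inter> T\<close> is then
  exactly a union of connected components of the boxes lying in neither difference, and \<open>E\<close> is
  the Boolean lattice on these components.
\<close>

section \<open>The rectangle and its central symmetry\<close>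

lemma finite_rect: "finite (rect n m)"
  by (rule finite_subset[of _ "{..n} \<times> {..m}"]) (auto simp: rect_def)

lemma rect_subset_positive: "rect n m \<subseteq> {1..} \<times> {1..}"
  by (auto simp: rect_def)

lemma is_partition_subset_positive: "is_partition L \<Longrightarrow> L \<subseteq> {1..} \<times> {1..}"
  by (auto simp: is_partition_def)

lemma theta_in_rect: "x \<in> rect n m \<Longrightarrow> theta n m x \<in> rect n m"
  by (auto simp: rect_def theta_def)

lemma theta_theta: "x \<in> rect n m \<Longrightarrow> theta n m (theta n m x) = x"
  by (auto simp: rect_def theta_def)

lemma theta_image_subset_rect: "S \<subseteq> rect n m \<Longrightarrow> theta n m ` S \<subseteq> rect n m"
  using theta_in_rect by blast

lemma theta_image_theta_image: "S \<subseteq> rect n m \<Longrightarrow> theta n m ` theta n m ` S = S"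
  by (force simp: image_image theta_theta)

lemma bij_betw_theta: "bij_betw (theta n m) (rect n m) (rect n m)"
  by (rule bij_betw_byWitness[where f' = "theta n m"]) (auto simp: theta_in_rect theta_theta)

lemma theta_snd_subset_rect: "\<alpha> \<in> P_nm n m \<Longrightarrow> theta n m ` snd \<alpha> \<subseteq> rect n m"
  by (rule theta_image_subset_rect) (simp add: P_nm_def)

section \<open>Contents and the power sums \<open>b\<^sub>r\<close>\<close>

lemma vanishing_power_sums_imp_zero:
  fixes w :: "'a::idom \<Rightarrow> 'a"
  assumes fin: "finite F" and sums: "\<And>s. (\<Sum>z\<in>F. w z * z ^ s) = 0" and z0: "z0 \<in> F"
  shows "w z0 = 0"
proof -
  define p where "p = (\<Prod>j\<in>F - {z0}. [:-j, 1:])"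
  have poly_p: "poly p x = (\<Prod>j\<in>F - {z0}. x - j)" for x
    by (simp add: p_def poly_prod)
  have "(\<Sum>z\<in>F. w z * poly p z) = (\<Sum>i\<le>degree p. coeff p i * (\<Sum>z\<in>F. w z * z ^ i))"
    by (simp add: poly_altdef sum_distrib_left mult_ac sum.swap[of _ F])
  also have "\<dots> = 0"
    using sums by simp
  finally have "(\<Sum>z\<in>F. w z * poly p z) = 0" .
  moreover have "(\<Sum>z\<in>F - {z0}. w z * poly p z) = 0"
    using fin by (intro sum.neutral) (auto simp: poly_p)
  ultimately have "w z0 * poly p z0 = 0"
    using fin z0 by (simp add: sum.remove)
  then show ?thesis
    using fin by (simp add: poly_p)
qed

definition box_content :: "complex \<Rightarrow> box \<Rightarrow> complex" where
  "box_content k x = cont k x 0"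

definition dual_content :: "complex \<Rightarrow> complex \<Rightarrow> box \<Rightarrow> complex" where
  "dual_content k p0 y = - cont k y (1 + k - k * p0)"

definition content_weight :: "complex \<Rightarrow> complex \<Rightarrow> bipart \<Rightarrow> complex \<Rightarrow> int" where
  "content_weight k p0 a z =
     of_bool (z \<in> box_content k ` fst a) - of_bool (z \<in> dual_content k p0 ` snd a)"

lemma bval_Suc_eq:
  "bval (Suc s) a k p0 = (\<Sum>x\<in>fst a. box_content k x ^ s) - (\<Sum>y\<in>snd a. dual_content k p0 y ^ s)"
proof -
  have "(-1) ^ Suc s * c ^ s = - ((- c) ^ s)" for c :: complex
    by (simp add: power_minus[of c])
  then show ?thesis
    by (simp add: bval_def box_content_def dual_content_def sum_distrib_left sum_negf del: power_Suc)
qed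

lemma bval_Suc_eq_sum_content_weight:
  assumes "finite F" "box_content k ` fst a \<subseteq> F" "dual_content k p0 ` snd a \<subseteq> F"
    and "inj_on (box_content k) (fst a)" "inj_on (dual_content k p0) (snd a)"
  shows "bval (Suc s) a k p0 = (\<Sum>z\<in>F. of_int (content_weight k p0 a z) * z ^ s)"
proof -
  have "(\<Sum>z\<in>F. of_int (content_weight k p0 a z) * z ^ s)
      = (\<Sum>z\<in>F. of_bool (z \<in> box_content k ` fst a) * z ^ s)
        - (\<Sum>z\<in>F. of_bool (z \<in> dual_content k p0 ` snd a) * z ^ s)"
    by (simp add: content_weight_def left_diff_distrib sum_subtractf)
  also have "\<dots> = (\<Sum>z\<in>box_content k ` fst a. z ^ s) - (\<Sum>z\<in>dual_content k p0 ` snd a. z ^ s)"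
    using assms(1-3) by (simp add: Int_absorb1)
  finally show ?thesis
    using assms(4,5) by (simp add: bval_Suc_eq sum.reindex)
qed

lemma E_equiv_iff_content_weight_eq:
  assumes fin: "finite (fst a)" "finite (snd a)" "finite (fst b)" "finite (snd b)"
    and inj: "inj_on (box_content k) (fst a)" "inj_on (dual_content k p0) (snd a)"
      "inj_on (box_content k) (fst b)" "inj_on (dual_content k p0) (snd b)"
  shows "E_equiv k p0 a b \<longleftrightarrow> content_weight k p0 a = content_weight k p0 b"
proof -
  define F where "F = box_content k ` fst a \<union> dual_content k p0 ` snd a
    \<union> box_content k ` fst b \<union> dual_content k p0 ` snd b"
  have "finite F"
    using fin by (simp add: F_def)
  have bval_a: "bval (Suc s) a k p0 = (\<Sum>z\<in>F. of_int (content_weight k p0 a z) * z ^ s)" for s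
    using \<open>finite F\<close> inj by (intro bval_Suc_eq_sum_content_weight) (auto simp: F_def)
  have bval_b: "bval (Suc s) b k p0 = (\<Sum>z\<in>F. of_int (content_weight k p0 b z) * z ^ s)" for s
    using \<open>finite F\<close> inj by (intro bval_Suc_eq_sum_content_weight) (auto simp: F_def)
  have "E_equiv k p0 a b \<longleftrightarrow> (\<forall>s. bval (Suc s) a k p0 = bval (Suc s) b k p0)"
    unfolding E_equiv_def by (auto simp: Suc_le_eq gr0_conv_Suc)
  also have "\<dots> \<longleftrightarrow> (\<forall>s. (\<Sum>z\<in>F. of_int (content_weight k p0 a z - content_weight k p0 b z) * z ^ s) = (0::complex))"
    by (simp add: bval_a bval_b left_diff_distrib sum_subtractf)
  also have "\<dots> \<longleftrightarrow> (\<forall>z\<in>F. content_weight k p0 a z = content_weight k p0 b z)"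
  proof
    assume sums: "\<forall>s. (\<Sum>z\<in>F. of_int (content_weight k p0 a z - content_weight k p0 b z) * z ^ s) = (0::complex)"
    have "(of_int (content_weight k p0 a z - content_weight k p0 b z) :: complex) = 0" if "z \<in> F" for z
      by (rule vanishing_power_sums_imp_zero[OF \<open>finite F\<close> sums[rule_format] that])
    then show "\<forall>z\<in>F. content_weight k p0 a z = content_weight k p0 b z"
      by simp
  qed simp
  also have "\<dots> \<longleftrightarrow> content_weight k p0 a = content_weight k p0 b"
  proof
    assume eq_on_F: "\<forall>z\<in>F. content_weight k p0 a z = content_weight k p0 b z"
    have "content_weight k p0 a z = 0 \<and> content_weight k p0 b z = 0" if "z \<notin> F" for z
      using that by (simp add: content_weight_def F_def)
    with eq_on_F show "content_weight k p0 a = content_weight k p0 b"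
      by (metis ext)
  qed simp
  finally show ?thesis .
qed

lemma of_int_add_mult_eq_iff:
  assumes "k \<notin> \<rat>"
  shows "of_int a + k * of_int b = of_int a' + k * (of_int b' :: complex) \<longleftrightarrow> a = a' \<and> b = b'"
proof
  assume eq: "of_int a + k * of_int b = of_int a' + k * (of_int b' :: complex)"
  have "b = b'"
  proof (rule ccontr)
    assume "b \<noteq> b'"
    with eq have "k = of_int (a' - a) / of_int (b - b')"
      by (simp add: field_simps)
    with assms show False
      by simp
  qed
  with eq show "a = a' \<and> b = b'"
    by simp
qed simp

lemma box_content_eq:
  "x \<in> {1..} \<times> {1..} \<Longrightarrow> box_content k x = of_int (int (snd x) - 1) + k * of_int (int (fst x) - 1)"
  by (auto simp: box_content_def cont_def of_nat_diff)

lemma dual_content_eq: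
  assumes "k \<noteq> 0" "p0 = of_nat n + of_nat m / k" "y \<in> {1..} \<times> {1..}"
  shows "dual_content k p0 y = of_int (int m - int (snd y)) + k * of_int (int n - int (fst y))"
proof -
  have "k * p0 = k * of_nat n + of_nat m"
    using assms(1,2) by (simp add: field_simps)
  then show ?thesis
    using assms(3) by (auto simp: dual_content_def cont_def of_nat_diff algebra_simps)
qed

lemma inj_on_box_content:
  assumes "k \<notin> \<rat>"
  shows "inj_on (box_content k) ({1..} \<times> {1..})"
proof (rule inj_onI)
  fix x x' assume pos: "x \<in> {1..} \<times> {1..}" "x' \<in> {1..} \<times> {1..}"
    and "box_content k x = box_content k x'"
  moreover have "box_content k x = box_content k x'
      \<longleftrightarrow> int (snd x) - 1 = int (snd x') - 1 \<and> int (fst x) - 1 = int (fst x') - 1"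
    unfolding box_content_eq[OF pos(1)] box_content_eq[OF pos(2)]
    by (rule of_int_add_mult_eq_iff[OF assms])
  ultimately show "x = x'"
    by (simp add: prod_eq_iff)
qed

lemma inj_on_dual_content:
  assumes "k \<notin> \<rat>" "p0 = of_nat n + of_nat m / k"
  shows "inj_on (dual_content k p0) ({1..} \<times> {1..})"
proof (rule inj_onI)
  have "k \<noteq> 0"
    using assms(1) by auto
  fix y y' assume pos: "y \<in> {1..} \<times> {1..}" "y' \<in> {1..} \<times> {1..}"
    and "dual_content k p0 y = dual_content k p0 y'"
  moreover have "dual_content k p0 y = dual_content k p0 y'
      \<longleftrightarrow> int m - int (snd y) = int m - int (snd y') \<and> int n - int (fst y) = int n - int (fst y')"
    unfolding dual_content_eq[OF \<open>k \<noteq> 0\<close> assms(2) pos(1)] dual_content_eq[OF \<open>k \<noteq> 0\<close> assms(2) pos(2)]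
    by (rule of_int_add_mult_eq_iff[OF assms(1)])
  ultimately show "y = y'"
    by (simp add: prod_eq_iff)
qed

lemma box_content_eq_dual_content_iff:
  assumes "k \<notin> \<rat>" "p0 = of_nat n + of_nat m / k" "x \<in> {1..} \<times> {1..}" "y \<in> {1..} \<times> {1..}"
  shows "box_content k x = dual_content k p0 y \<longleftrightarrow> x \<in> rect n m \<and> y = theta n m x"
proof -
  have "k \<noteq> 0"
    using assms(1) by auto
  have "box_content k x = dual_content k p0 y
      \<longleftrightarrow> int (snd x) - 1 = int m - int (snd y) \<and> int (fst x) - 1 = int n - int (fst y)"
    unfolding box_content_eq[OF assms(3)] dual_content_eq[OF \<open>k \<noteq> 0\<close> assms(2,4)]
    by (rule of_int_add_mult_eq_iff[OF assms(1)])
  then show ?thesis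
    using assms(3,4) by (auto simp: rect_def theta_def prod_eq_iff)
qed

lemma dual_content_eq_box_content_theta:
  assumes "k \<notin> \<rat>" "p0 = of_nat n + of_nat m / k" "y \<in> rect n m"
  shows "dual_content k p0 y = box_content k (theta n m y)"
  using box_content_eq_dual_content_iff[OF assms(1,2), of "theta n m y" y] assms(3)
    rect_subset_positive theta_in_rect theta_theta by (metis subsetD)

lemma E_equiv_iff_content_weight_eq_bipartition:
  assumes "k \<notin> \<rat>" "p0 = of_nat n + of_nat m / k" "is_bipartition a" "is_bipartition b"
  shows "E_equiv k p0 a b \<longleftrightarrow> content_weight k p0 a = content_weight k p0 b"
proof -
  have "finite (fst c) \<and> finite (snd c) \<and> inj_on (box_content k) (fst c) \<and> inj_on (dual_content k p0) (snd c)"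
    if "is_bipartition c" for c
    using that is_partition_subset_positive
      inj_on_subset[OF inj_on_box_content[OF assms(1)]] inj_on_subset[OF inj_on_dual_content[OF assms(1,2)]]
    by (auto simp: is_bipartition_def is_partition_def)
  then show ?thesis
    using assms(3,4) by (intro E_equiv_iff_content_weight_eq) auto
qed

lemma content_weight_box_content_outside_rect:
  assumes hk: "k \<notin> \<rat>" and p0: "p0 = of_nat n + of_nat m / k" and \<beta>: "is_bipartition \<beta>"
    and x: "x \<in> {1..} \<times> {1..}" "x \<notin> rect n m"
  shows "content_weight k p0 \<beta> (box_content k x) = of_bool (x \<in> fst \<beta>)"
proof -
  have pos: "fst \<beta> \<subseteq> {1..} \<times> {1..}" "snd \<beta> \<subseteq> {1..} \<times> {1..}"
    using \<beta> is_partition_subset_positive by (simp_all add: is_bipartition_def)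
  have "box_content k x \<in> box_content k ` fst \<beta> \<longleftrightarrow> x \<in> fst \<beta>"
    using inj_on_image_mem_iff[OF inj_on_box_content[OF hk] x(1) pos(1)] .
  moreover have "box_content k x \<noteq> dual_content k p0 y" if "y \<in> snd \<beta>" for y
    using box_content_eq_dual_content_iff[OF hk p0 x(1), of y] x(2) that pos(2) by auto
  then have "box_content k x \<notin> dual_content k p0 ` snd \<beta>"
    by blast
  ultimately show ?thesis
    by (simp add: content_weight_def)
qed

lemma content_weight_dual_content_outside_rect:
  assumes hk: "k \<notin> \<rat>" and p0: "p0 = of_nat n + of_nat m / k" and \<beta>: "is_bipartition \<beta>"
    and y: "y \<in> {1..} \<times> {1..}" "y \<notin> rect n m"
  shows "content_weight k p0 \<beta> (dual_content k p0 y) = - of_bool (y \<in> snd \<beta>)"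
proof -
  have pos: "fst \<beta> \<subseteq> {1..} \<times> {1..}" "snd \<beta> \<subseteq> {1..} \<times> {1..}"
    using \<beta> is_partition_subset_positive by (simp_all add: is_bipartition_def)
  have "dual_content k p0 y \<in> dual_content k p0 ` snd \<beta> \<longleftrightarrow> y \<in> snd \<beta>"
    using inj_on_image_mem_iff[OF inj_on_dual_content[OF hk p0] y(1) pos(2)] .
  moreover have "dual_content k p0 y \<noteq> box_content k x" if "x \<in> fst \<beta>" for x
    using box_content_eq_dual_content_iff[OF hk p0 _ y(1), of x] y(2) that pos(1) theta_in_rect by auto
  then have "dual_content k p0 y \<notin> box_content k ` fst \<beta>"
    by blast
  ultimately show ?thesis
    by (simp add: content_weight_def)
qed

lemma E_class_subset_P_nm:
  assumes hk: "k \<notin> \<rat>" and p0: "p0 = of_nat n + of_nat m / k" and \<alpha>: "\<alpha> \<in> P_nm n m"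
  shows "E_class k p0 \<alpha> \<subseteq> P_nm n m"
proof
  fix \<beta> assume "\<beta> \<in> E_class k p0 \<alpha>"
  then have \<beta>: "is_bipartition \<beta>" and "E_equiv k p0 \<alpha> \<beta>"
    by (auto simp: E_class_def)
  have \<alpha>': "is_bipartition \<alpha>" "fst \<alpha> \<subseteq> rect n m" "snd \<alpha> \<subseteq> rect n m"
    using \<alpha> by (auto simp: P_nm_def)
  have weight: "content_weight k p0 \<alpha> = content_weight k p0 \<beta>"
    using E_equiv_iff_content_weight_eq_bipartition[OF hk p0 \<alpha>'(1) \<beta>] \<open>E_equiv k p0 \<alpha> \<beta>\<close> by simp
  have pos: "fst \<beta> \<subseteq> {1..} \<times> {1..}" "snd \<beta> \<subseteq> {1..} \<times> {1..}"
    using \<beta> is_partition_subset_positive by (simp_all add: is_bipartition_def)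
  have "x \<in> rect n m" if "x \<in> fst \<beta>" for x
  proof (rule ccontr)
    assume "x \<notin> rect n m"
    with that pos(1) \<alpha>'(2) weight show False
      using content_weight_box_content_outside_rect[OF hk p0 \<alpha>'(1), of x]
        content_weight_box_content_outside_rect[OF hk p0 \<beta>, of x] by auto
  qed
  moreover have "y \<in> rect n m" if "y \<in> snd \<beta>" for y
  proof (rule ccontr)
    assume "y \<notin> rect n m"
    with that pos(2) \<alpha>'(3) weight show False
      using content_weight_dual_content_outside_rect[OF hk p0 \<alpha>'(1), of y]
        content_weight_dual_content_outside_rect[OF hk p0 \<beta>, of y] by auto
  qed
  ultimately show "\<beta> \<in> P_nm n m"
    using \<beta> by (auto simp: P_nm_def)
qed

lemma of_bool_diff_eq_iff:
  "(of_bool P - of_bool Q :: int) = of_bool P' - of_bool Q'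
    \<longleftrightarrow> (P \<and> \<not> Q \<longleftrightarrow> P' \<and> \<not> Q') \<and> (Q \<and> \<not> P \<longleftrightarrow> Q' \<and> \<not> P')"
  by (cases P; cases Q; cases P'; cases Q') auto

lemma of_bool_diff_image_eq_iff:
  assumes inj: "inj_on f U" and subsets: "A \<subseteq> U" "B \<subseteq> U" "A' \<subseteq> U" "B' \<subseteq> U"
  shows "(\<lambda>z. of_bool (z \<in> f ` A) - of_bool (z \<in> f ` B) :: int)
      = (\<lambda>z. of_bool (z \<in> f ` A') - of_bool (z \<in> f ` B'))
    \<longleftrightarrow> A - B = A' - B' \<and> B - A = B' - A'"
proof -
  have diffs: "A - B \<subseteq> U" "B - A \<subseteq> U" "A' - B' \<subseteq> U" "B' - A' \<subseteq> U"
    using subsets by auto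
  have "(\<lambda>z. of_bool (z \<in> f ` A) - of_bool (z \<in> f ` B) :: int)
      = (\<lambda>z. of_bool (z \<in> f ` A') - of_bool (z \<in> f ` B'))
    \<longleftrightarrow> f ` A - f ` B = f ` A' - f ` B' \<and> f ` B - f ` A = f ` B' - f ` A'"
    unfolding fun_eq_iff of_bool_diff_eq_iff set_eq_iff Diff_iff by blast
  also have "\<dots> \<longleftrightarrow> f ` (A - B) = f ` (A' - B') \<and> f ` (B - A) = f ` (B' - A')"
    using subsets diffs by (simp add: inj_on_image_set_diff[OF inj])
  also have "\<dots> \<longleftrightarrow> A - B = A' - B' \<and> B - A = B' - A'"
    using diffs by (simp add: inj_on_image_eq_iff[OF inj])
  finally show ?thesis .
qed

lemma E_equiv_iff_same_differences:
  assumes hk: "k \<notin> \<rat>" and p0: "p0 = of_nat n + of_nat m / k"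
    and a: "a \<in> P_nm n m" and b: "b \<in> P_nm n m"
  shows "E_equiv k p0 a b \<longleftrightarrow>
    fst a - theta n m ` snd a = fst b - theta n m ` snd b \<and>
    theta n m ` snd a - fst a = theta n m ` snd b - fst b"
proof -
  have weight: "content_weight k p0 c = (\<lambda>z.
      of_bool (z \<in> box_content k ` fst c) - of_bool (z \<in> box_content k ` theta n m ` snd c))"
    if "c \<in> P_nm n m" for c
  proof -
    have "dual_content k p0 ` snd c = box_content k ` theta n m ` snd c"
      using that dual_content_eq_box_content_theta[OF hk p0]
      by (auto simp: P_nm_def image_image intro!: image_cong)
    then show ?thesis
      by (simp add: content_weight_def fun_eq_iff)
  qed
  have inj: "inj_on (box_content k) (rect n m)"
    using inj_on_subset[OF inj_on_box_content[OF hk] rect_subset_positive] .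
  have "E_equiv k p0 a b \<longleftrightarrow> content_weight k p0 a = content_weight k p0 b"
    using a b by (intro E_equiv_iff_content_weight_eq_bipartition[OF hk p0]) (auto simp: P_nm_def)
  also have "\<dots> \<longleftrightarrow> fst a - theta n m ` snd a = fst b - theta n m ` snd b \<and>
    theta n m ` snd a - fst a = theta n m ` snd b - fst b"
    unfolding weight[OF a] weight[OF b]
    by (rule of_bool_diff_image_eq_iff[OF inj]) (use a b theta_image_subset_rect in \<open>auto simp: P_nm_def\<close>)
  finally show ?thesis .
qed

section \<open>Down-sets and up-sets with prescribed differences\<close>

text \<open>Up-sets are expressed as down-sets for the converse relation \<open>R\<inverse>\<inverse>\<close>.\<close>
definition down_closed_on :: "'a set \<Rightarrow> ('a \<Rightarrow> 'a \<Rightarrow> bool) \<Rightarrow> 'a set \<Rightarrow> bool" where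
  "down_closed_on U R X \<longleftrightarrow> (\<forall>x\<in>X. \<forall>y\<in>U. R y x \<longrightarrow> y \<in> X)"

lemma down_closed_on_Union:
  "(\<And>S. S \<in> \<S> \<Longrightarrow> down_closed_on U R S) \<Longrightarrow> down_closed_on U R (\<Union>\<S>)"
  unfolding down_closed_on_def by blast

lemma down_closed_on_diff_Un:
  assumes "L \<subseteq> U" "down_closed_on U R L" "down_closed_on U R\<inverse>\<inverse> T"
    and "S \<subseteq> U - ((L - T) \<union> (T - L))" "down_closed_on (U - ((L - T) \<union> (T - L))) R S"
  shows "down_closed_on U R ((L - T) \<union> S)"
  using assms unfolding down_closed_on_def conversep_iff by blast

lemma down_closed_on_Int:
  assumes "down_closed_on U R L" "down_closed_on U R\<inverse>\<inverse> T"
  shows "down_closed_on (U - ((L - T) \<union> (T - L))) R (L \<inter> T)"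
  using assms unfolding down_closed_on_def conversep_iff by blast

lemma down_up_closed_fixed_differences_iff:
  assumes "L \<subseteq> U" "T \<subseteq> U" "down_closed_on U R L" "down_closed_on U R\<inverse>\<inverse> T"
  defines "Z \<equiv> U - ((L - T) \<union> (T - L))"
  shows "L' \<subseteq> U \<and> T' \<subseteq> U \<and> down_closed_on U R L' \<and> down_closed_on U R\<inverse>\<inverse> T' \<and>
      L - T = L' - T' \<and> T - L = T' - L' \<longleftrightarrow>
    (\<exists>S \<subseteq> Z. down_closed_on Z R S \<and> down_closed_on Z R\<inverse>\<inverse> S \<and> L' = (L - T) \<union> S \<and> T' = (T - L) \<union> S)"
proof
  assume H: "L' \<subseteq> U \<and> T' \<subseteq> U \<and> down_closed_on U R L' \<and> down_closed_on U R\<inverse>\<inverse> T' \<and>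
      L - T = L' - T' \<and> T - L = T' - L'"
  then have "Z = U - ((L' - T') \<union> (T' - L'))" "Z = U - ((T' - L') \<union> (L' - T'))"
    by (auto simp: Z_def)
  with H have "down_closed_on Z R (L' \<inter> T')" "down_closed_on Z R\<inverse>\<inverse> (T' \<inter> L')"
    using down_closed_on_Int[of U R L' T'] down_closed_on_Int[of U "R\<inverse>\<inverse>" T' L'] by simp_all
  moreover have "L' \<inter> T' \<subseteq> Z" "L' = (L - T) \<union> (L' \<inter> T')" "T' = (T - L) \<union> (L' \<inter> T')"
    using H by (auto simp: Z_def)
  ultimately show "\<exists>S \<subseteq> Z. down_closed_on Z R S \<and> down_closed_on Z R\<inverse>\<inverse> S \<and> L' = (L - T) \<union> S \<and> T' = (T - L) \<union> S"
    by (metis Int_commute)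
next
  assume "\<exists>S \<subseteq> Z. down_closed_on Z R S \<and> down_closed_on Z R\<inverse>\<inverse> S \<and> L' = (L - T) \<union> S \<and> T' = (T - L) \<union> S"
  then obtain S where S: "S \<subseteq> Z" "down_closed_on Z R S" "down_closed_on Z R\<inverse>\<inverse> S"
    and L': "L' = (L - T) \<union> S" and T': "T' = (T - L) \<union> S"
    by blast
  have Z_commute: "U - ((T - L) \<union> (L - T)) = Z"
    by (auto simp: Z_def)
  have "down_closed_on U R L'"
    unfolding L' using assms(1,3,4) S(1,2) unfolding Z_def by (rule down_closed_on_diff_Un)
  moreover have "down_closed_on U R\<inverse>\<inverse> T'"
  proof -
    have "down_closed_on U R\<inverse>\<inverse>\<inverse>\<inverse> L"
      using assms(3) by simp
    from assms(2,4) this S(1,3) show ?thesis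
      unfolding T' Z_commute[symmetric] by (rule down_closed_on_diff_Un)
  qed
  moreover have "L' \<subseteq> U" "T' \<subseteq> U" "L - T = L' - T'" "T - L = T' - L'"
    using assms(1,2) S(1) unfolding L' T' Z_def by blast+
  ultimately show "L' \<subseteq> U \<and> T' \<subseteq> U \<and> down_closed_on U R L' \<and> down_closed_on U R\<inverse>\<inverse> T' \<and>
      L - T = L' - T' \<and> T - L = T' - L'"
    by blast
qed

lemma down_closed_on_bij_image_iff:
  assumes bij: "bij_betw f U U" and rel: "\<And>x y. x \<in> U \<Longrightarrow> y \<in> U \<Longrightarrow> R (f x) (f y) \<longleftrightarrow> R' x y"
    and "X \<subseteq> U"
  shows "down_closed_on U R (f ` X) \<longleftrightarrow> down_closed_on U R' X"
proof -
  have "f ` U = U" "inj_on f U"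
    using bij by (auto simp: bij_betw_def)
  have mem: "f y \<in> f ` X \<longleftrightarrow> y \<in> X" if "y \<in> U" for y
    using inj_on_image_mem_iff[OF \<open>inj_on f U\<close> that \<open>X \<subseteq> U\<close>] .
  have "down_closed_on U R (f ` X) \<longleftrightarrow> (\<forall>x\<in>X. \<forall>y\<in>f ` U. R y (f x) \<longrightarrow> y \<in> f ` X)"
    unfolding down_closed_on_def \<open>f ` U = U\<close> by blast
  also have "\<dots> \<longleftrightarrow> down_closed_on U R' X"
    using rel mem \<open>X \<subseteq> U\<close> by (auto simp: down_closed_on_def)
  finally show ?thesis .
qed

definition box_pred :: "box \<Rightarrow> box \<Rightarrow> bool" where
  "box_pred x y \<longleftrightarrow> (fst x = fst y \<and> snd x + 1 = snd y) \<or> (snd x = snd y \<and> fst x + 1 = fst y)"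

lemma box_adj_iff_box_pred: "box_adj x y \<longleftrightarrow> box_pred x y \<or> box_pred y x"
  by (auto simp: box_adj_def box_pred_def)

lemma box_adj_commute: "box_adj x y \<longleftrightarrow> box_adj y x"
  by (auto simp: box_adj_def)

lemma box_pred_theta_iff:
  "x \<in> rect n m \<Longrightarrow> y \<in> rect n m \<Longrightarrow> box_pred (theta n m x) (theta n m y) \<longleftrightarrow> box_pred y x"
  by (auto simp: box_pred_def theta_def rect_def)

lemma box_adj_theta_iff:
  "x \<in> rect n m \<Longrightarrow> y \<in> rect n m \<Longrightarrow> box_adj (theta n m x) (theta n m y) \<longleftrightarrow> box_adj x y"
  by (auto simp: box_adj_iff_box_pred box_pred_theta_iff)

lemma down_closed_on_box_adj_iff:
  "down_closed_on Z box_adj S \<longleftrightarrow> down_closed_on Z box_pred S \<and> down_closed_on Z box_pred\<inverse>\<inverse> S"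
  by (auto simp: down_closed_on_def box_adj_iff_box_pred)

lemma down_closed_on_rect_box_pred_iff:
  assumes X: "X \<subseteq> rect n m"
  shows "down_closed_on (rect n m) box_pred X \<longleftrightarrow>
    (\<forall>(i, j)\<in>X. (i > 1 \<longrightarrow> (i - 1, j) \<in> X) \<and> (j > 1 \<longrightarrow> (i, j - 1) \<in> X))"
proof
  assume down: "down_closed_on (rect n m) box_pred X"
  show "\<forall>(i, j)\<in>X. (i > 1 \<longrightarrow> (i - 1, j) \<in> X) \<and> (j > 1 \<longrightarrow> (i, j - 1) \<in> X)"
  proof (intro ballI, clarify, intro conjI impI)
    fix i j assume "(i, j) \<in> X"
    then have "(i, j) \<in> rect n m"
      using X by blast
    show "(i - 1, j) \<in> X" if "i > 1"
    proof -
      have "(i - 1, j) \<in> rect n m" "box_pred (i - 1, j) (i, j)"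
        using \<open>(i, j) \<in> rect n m\<close> that by (auto simp: rect_def box_pred_def)
      with down \<open>(i, j) \<in> X\<close> show ?thesis
        unfolding down_closed_on_def by blast
    qed
    show "(i, j - 1) \<in> X" if "j > 1"
    proof -
      have "(i, j - 1) \<in> rect n m" "box_pred (i, j - 1) (i, j)"
        using \<open>(i, j) \<in> rect n m\<close> that by (auto simp: rect_def box_pred_def)
      with down \<open>(i, j) \<in> X\<close> show ?thesis
        unfolding down_closed_on_def by blast
    qed
  qed
next
  assume steps: "\<forall>(i, j)\<in>X. (i > 1 \<longrightarrow> (i - 1, j) \<in> X) \<and> (j > 1 \<longrightarrow> (i, j - 1) \<in> X)"
  show "down_closed_on (rect n m) box_pred X"
    unfolding down_closed_on_def
  proof (intro ballI impI)
    fix x y assume "x \<in> X" "y \<in> rect n m" "box_pred y x"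
    obtain i j where x: "x = (i, j)"
      by fastforce
    have "y = (i, j - 1) \<and> j > 1 \<or> y = (i - 1, j) \<and> i > 1"
      using \<open>y \<in> rect n m\<close> \<open>box_pred y x\<close> by (auto simp: x box_pred_def rect_def prod_eq_iff)
    then show "y \<in> X"
      using bspec[OF steps \<open>x \<in> X\<close>] by (auto simp: x)
  qed
qed

lemma is_partition_iff_down_closed_on:
  assumes "X \<subseteq> rect n m"
  shows "is_partition X \<longleftrightarrow> down_closed_on (rect n m) box_pred X"
proof -
  have "finite X" "\<forall>(i, j)\<in>X. i \<ge> 1 \<and> j \<ge> 1"
    using assms finite_subset[OF assms finite_rect] by (auto simp: rect_def)
  then show ?thesis
    unfolding is_partition_def down_closed_on_rect_box_pred_iff[OF assms] by blast
qed

lemma is_partition_theta_image_iff: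
  assumes "X \<subseteq> rect n m"
  shows "is_partition (theta n m ` X) \<longleftrightarrow> down_closed_on (rect n m) box_pred\<inverse>\<inverse> X"
  using is_partition_iff_down_closed_on[OF theta_image_subset_rect[OF assms]]
    down_closed_on_bij_image_iff[OF bij_betw_theta, where R = box_pred and R' = "box_pred\<inverse>\<inverse>"] assms
  by (simp add: box_pred_theta_iff)

lemma pair_theta_image_mem_P_nm_iff:
  assumes "T \<subseteq> rect n m"
  shows "(L, theta n m ` T) \<in> P_nm n m \<longleftrightarrow>
    L \<subseteq> rect n m \<and> down_closed_on (rect n m) box_pred L \<and> down_closed_on (rect n m) box_pred\<inverse>\<inverse> T"
  using assms theta_image_subset_rect[OF assms] is_partition_iff_down_closed_on[of L n m]
    is_partition_theta_image_iff[OF assms]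
  by (auto simp: P_nm_def is_bipartition_def)

section \<open>Connected components\<close>

lemma components_eq_image: "components Z = (\<lambda>x. {y \<in> Z. connected_in Z x y}) ` Z"
  by (auto simp: components_def)

lemma finite_components: "finite Z \<Longrightarrow> finite (components Z)"
  by (simp add: components_eq_image)

lemma connected_in_sym: "connected_in Z x y \<Longrightarrow> connected_in Z y x"
  unfolding connected_in_def
  by (rule sympD[OF symp_rtranclp]) (auto intro: sympI simp: box_adj_commute)

lemma connected_in_trans: "connected_in Z x y \<Longrightarrow> connected_in Z y z \<Longrightarrow> connected_in Z x z"
  unfolding connected_in_def by (rule rtranclp_trans)

lemma connected_in_mem_down_closed_on:
  assumes "down_closed_on Z box_adj S" "x \<in> S" "connected_in Z x y"
  shows "y \<in> S"
  using assms(3,2) unfolding connected_in_def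
  by (induction rule: rtranclp_induct) (use assms(1) in \<open>auto simp: down_closed_on_def box_adj_commute\<close>)

lemma component_subset: "C \<in> components Z \<Longrightarrow> C \<subseteq> Z"
  by (auto simp: components_eq_image)

lemma component_nonempty: "C \<in> components Z \<Longrightarrow> C \<noteq> {}"
  by (auto simp: components_eq_image connected_in_def)

lemma down_closed_on_component: "C \<in> components Z \<Longrightarrow> down_closed_on Z box_adj C"
  by (auto simp: components_eq_image down_closed_on_def connected_in_def box_adj_commute
      intro: rtranclp.rtrancl_into_rtrancl)

lemma component_subset_down_closed_on:
  assumes "down_closed_on Z box_adj S" "C \<in> components Z" "C \<inter> S \<noteq> {}"
  shows "C \<subseteq> S"
proof
  obtain x where x: "x \<in> Z" "C = {y \<in> Z. connected_in Z x y}"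
    using assms(2) by (auto simp: components_eq_image)
  obtain y where y: "y \<in> C" "y \<in> S"
    using assms(3) by blast
  fix z assume "z \<in> C"
  have "connected_in Z y z"
    using y(1) \<open>z \<in> C\<close> x(2) by (auto intro: connected_in_trans connected_in_sym)
  then show "z \<in> S"
    using connected_in_mem_down_closed_on[OF assms(1) y(2)] by blast
qed

lemma components_disjoint:
  "C \<in> components Z \<Longrightarrow> C' \<in> components Z \<Longrightarrow> C \<inter> C' \<noteq> {} \<Longrightarrow> C = C'"
  by (metis component_subset_down_closed_on down_closed_on_component inf_commute subset_antisym)

lemma down_closed_on_eq_Union_components:
  assumes "S \<subseteq> Z" "down_closed_on Z box_adj S"
  shows "S = \<Union>{C \<in> components Z. C \<subseteq> S}"
proof
  show "S \<subseteq> \<Union>{C \<in> components Z. C \<subseteq> S}"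
  proof
    fix x assume "x \<in> S"
    define C where "C = {y \<in> Z. connected_in Z x y}"
    have "C \<in> components Z" "x \<in> C"
      using \<open>x \<in> S\<close> assms(1) by (auto simp: C_def components_eq_image connected_in_def)
    moreover have "C \<subseteq> S"
      using component_subset_down_closed_on[OF assms(2) \<open>C \<in> components Z\<close>] \<open>x \<in> C\<close> \<open>x \<in> S\<close>
      by blast
    ultimately show "x \<in> \<Union>{C \<in> components Z. C \<subseteq> S}"
      by blast
  qed
qed blast

lemma inj_on_Union_components: "inj_on Union (Pow (components Z))"
proof -
  have "\<C> \<subseteq> \<C>'"
    if sub: "\<C> \<subseteq> components Z" "\<C>' \<subseteq> components Z" and eq: "\<Union>\<C> = \<Union>\<C>'" for \<C> \<C>'
  proof
    fix C assume "C \<in> \<C>"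
    then have "C \<noteq> {}"
      using component_nonempty sub(1) by blast
    then obtain x where "x \<in> C"
      by blast
    then obtain C' where "C' \<in> \<C>'" "x \<in> C'"
      using \<open>C \<in> \<C>\<close> eq by blast
    then have "C = C'"
      using components_disjoint \<open>C \<in> \<C>\<close> \<open>x \<in> C\<close> sub by blast
    then show "C \<in> \<C>'"
      using \<open>C' \<in> \<C>'\<close> by simp
  qed
  then show ?thesis
    by (intro inj_onI) (simp add: subset_antisym)
qed

lemma bij_betw_Union_components:
  "bij_betw Union (Pow (components Z)) {S. S \<subseteq> Z \<and> down_closed_on Z box_adj S}"
proof (rule bij_betw_imageI[OF inj_on_Union_components])
  show "Union ` Pow (components Z) = {S. S \<subseteq> Z \<and> down_closed_on Z box_adj S}"
  proof
    show "Union ` Pow (components Z) \<subseteq> {S. S \<subseteq> Z \<and> down_closed_on Z box_adj S}"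
      using component_subset down_closed_on_component by (blast intro: down_closed_on_Union)
    show "{S. S \<subseteq> Z \<and> down_closed_on Z box_adj S} \<subseteq> Union ` Pow (components Z)"
    proof clarify
      fix S assume "S \<subseteq> Z" "down_closed_on Z box_adj S"
      then have "S = \<Union>{C \<in> components Z. C \<subseteq> S}"
        by (rule down_closed_on_eq_Union_components)
      then show "S \<in> Union ` Pow (components Z)"
        by blast
    qed
  qed
qed

lemma connected_in_image:
  assumes "connected_in Z x y"
    and "\<And>x y. x \<in> Z \<Longrightarrow> y \<in> Z \<Longrightarrow> box_adj x y \<Longrightarrow> box_adj (f x) (f y)"
  shows "connected_in (f ` Z) (f x) (f y)"
  using assms(1) unfolding connected_in_def
proof (induction rule: rtranclp_induct)
  case (step y z)
  then have "f y \<in> f ` Z \<and> f z \<in> f ` Z \<and> box_adj (f y) (f z)"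
    using assms(2) by auto
  with step.IH show ?case
    by (rule rtranclp.rtrancl_into_rtrancl)
qed simp

lemma components_image:
  assumes inj: "inj_on f Z" and adj: "\<And>x y. x \<in> Z \<Longrightarrow> y \<in> Z \<Longrightarrow> box_adj (f x) (f y) \<longleftrightarrow> box_adj x y"
  shows "components (f ` Z) = image f ` components Z"
proof -
  define g where "g = the_inv_into Z f"
  have g_f: "g (f x) = x" if "x \<in> Z" for x
    using the_inv_into_f_f[OF inj that] by (simp add: g_def)
  have "g ` f ` Z = Z"
    using inj by (simp add: g_def)
  have connected_iff: "connected_in (f ` Z) (f x) (f y) \<longleftrightarrow> connected_in Z x y" if "x \<in> Z" "y \<in> Z" for x y
  proof
    assume "connected_in (f ` Z) (f x) (f y)"
    then have "connected_in (g ` f ` Z) (g (f x)) (g (f y))"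
      by (rule connected_in_image) (use adj g_f in auto)
    then show "connected_in Z x y"
      using \<open>g ` f ` Z = Z\<close> g_f that by simp
  next
    assume "connected_in Z x y"
    then show "connected_in (f ` Z) (f x) (f y)"
      by (rule connected_in_image) (use adj in auto)
  qed
  have "{v \<in> f ` Z. connected_in (f ` Z) (f x) v} = f ` {y \<in> Z. connected_in Z x y}" if "x \<in> Z" for x
  proof -
    have "{v \<in> f ` Z. connected_in (f ` Z) (f x) v} = f ` {y \<in> Z. connected_in (f ` Z) (f x) (f y)}"
      by blast
    also have "{y \<in> Z. connected_in (f ` Z) (f x) (f y)} = {y \<in> Z. connected_in Z x y}"
      using connected_iff[OF that] by blast
    finally show ?thesis .
  qed
  then show ?thesis
    by (simp add: components_eq_image image_image cong: image_cong)
qed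

lemma components_theta_image:
  assumes "Z \<subseteq> rect n m"
  shows "components (theta n m ` Z) = image (theta n m) ` components Z"
proof (rule components_image)
  show "inj_on (theta n m) Z"
    using bij_betw_imp_inj_on[OF bij_betw_theta] assms by (rule inj_on_subset)
  show "box_adj (theta n m x) (theta n m y) \<longleftrightarrow> box_adj x y" if "x \<in> Z" "y \<in> Z" for x y
    using box_adj_theta_iff that assms by blast
qed

lemma bij_betw_image_theta_components:
  assumes "Z \<subseteq> rect n m"
  shows "bij_betw (image (theta n m)) (components Z) (components (theta n m ` Z))"
proof -
  have "inj_on (image (theta n m)) (Pow Z)"
    using inj_on_image_Pow[OF inj_on_subset[OF bij_betw_imp_inj_on[OF bij_betw_theta] assms]] .
  then show ?thesis
    unfolding components_theta_image[OF assms] using component_subset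
    by (intro bij_betw_imageI) (auto intro: inj_on_subset)
qed

section \<open>The equivalence class\<close>

text \<open>
  With \<open>L = fst \<alpha>\<close> and \<open>T = \<theta>(snd \<alpha>)\<close>, the boxes in exactly one of \<open>L\<close>, \<open>T\<close> are the same for
  the whole class; \<open>fill n m \<alpha> S\<close> adds the free boxes \<open>S\<close> to both. The extremes \<open>\<alpha>\<^sub>m\<close> and \<open>\<alpha>\<^sub>M\<close>
  are \<open>fill n m \<alpha> {}\<close> and \<open>fill n m \<alpha> (free_boxes n m \<alpha>)\<close>.
\<close>
definition free_boxes :: "nat \<Rightarrow> nat \<Rightarrow> bipart \<Rightarrow> box set" where
  "free_boxes n m \<alpha> = rect n m - ((fst \<alpha> - theta n m ` snd \<alpha>) \<union> (theta n m ` snd \<alpha> - fst \<alpha>))"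

definition fill :: "nat \<Rightarrow> nat \<Rightarrow> bipart \<Rightarrow> box set \<Rightarrow> bipart" where
  "fill n m \<alpha> S = ((fst \<alpha> - theta n m ` snd \<alpha>) \<union> S, theta n m ` ((theta n m ` snd \<alpha> - fst \<alpha>) \<union> S))"

lemma free_boxes_subset_rect: "free_boxes n m \<alpha> \<subseteq> rect n m"
  by (auto simp: free_boxes_def)

lemma theta_snd_fill:
  assumes "\<alpha> \<in> P_nm n m" "S \<subseteq> free_boxes n m \<alpha>"
  shows "theta n m ` snd (fill n m \<alpha> S) = (theta n m ` snd \<alpha> - fst \<alpha>) \<union> S"
proof -
  have "theta n m ` snd \<alpha> \<subseteq> rect n m"
    using assms(1) by (rule theta_snd_subset_rect)
  moreover have "S \<subseteq> rect n m"
    using assms(2) free_boxes_subset_rect by blast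
  ultimately have "(theta n m ` snd \<alpha> - fst \<alpha>) \<union> S \<subseteq> rect n m"
    by blast
  then show ?thesis
    by (simp add: fill_def theta_image_theta_image)
qed

lemma fill_mono: "S \<subseteq> S' \<Longrightarrow> bip_le (fill n m \<alpha> S) (fill n m \<alpha> S')"
  by (auto simp: bip_le_def fill_def)

lemma inj_on_fill: "inj_on (fill n m \<alpha>) (Pow (free_boxes n m \<alpha>))"
proof (rule inj_onI)
  have "S = fst (fill n m \<alpha> S) - (fst \<alpha> - theta n m ` snd \<alpha>)" if "S \<subseteq> free_boxes n m \<alpha>" for S
    using that by (auto simp: fill_def free_boxes_def)
  then show "S = S'" if "S \<in> Pow (free_boxes n m \<alpha>)" "S' \<in> Pow (free_boxes n m \<alpha>)"
    "fill n m \<alpha> S = fill n m \<alpha> S'" for S S'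
    using that by (metis PowD)
qed

lemma mem_E_class_iff:
  assumes hk: "k \<notin> \<rat>" and p0: "p0 = of_nat n + of_nat m / k" and \<alpha>: "\<alpha> \<in> P_nm n m"
  shows "\<beta> \<in> E_class k p0 \<alpha> \<longleftrightarrow> (\<exists>L T. \<beta> = (L, theta n m ` T) \<and>
    L \<subseteq> rect n m \<and> T \<subseteq> rect n m \<and>
    down_closed_on (rect n m) box_pred L \<and> down_closed_on (rect n m) box_pred\<inverse>\<inverse> T \<and>
    fst \<alpha> - theta n m ` snd \<alpha> = L - T \<and> theta n m ` snd \<alpha> - fst \<alpha> = T - L)"
proof
  assume "\<beta> \<in> E_class k p0 \<alpha>"
  then have "\<beta> \<in> P_nm n m" "E_equiv k p0 \<alpha> \<beta>"
    using E_class_subset_P_nm[OF hk p0 \<alpha>] by (auto simp: E_class_def)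
  define L T where "L = fst \<beta>" and "T = theta n m ` snd \<beta>"
  have "T \<subseteq> rect n m"
    using theta_snd_subset_rect[OF \<open>\<beta> \<in> P_nm n m\<close>] by (simp add: T_def)
  moreover have \<beta>: "\<beta> = (L, theta n m ` T)"
    using \<open>\<beta> \<in> P_nm n m\<close> by (simp add: L_def T_def P_nm_def theta_image_theta_image)
  ultimately have "L \<subseteq> rect n m" "down_closed_on (rect n m) box_pred L"
    "down_closed_on (rect n m) box_pred\<inverse>\<inverse> T"
    using pair_theta_image_mem_P_nm_iff \<open>\<beta> \<in> P_nm n m\<close> by auto
  moreover have "fst \<alpha> - theta n m ` snd \<alpha> = L - T \<and> theta n m ` snd \<alpha> - fst \<alpha> = T - L"
    using E_equiv_iff_same_differences[OF hk p0 \<alpha> \<open>\<beta> \<in> P_nm n m\<close>] \<open>E_equiv k p0 \<alpha> \<beta>\<close>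
    by (simp add: L_def T_def)
  ultimately show "\<exists>L T. \<beta> = (L, theta n m ` T) \<and> L \<subseteq> rect n m \<and> T \<subseteq> rect n m \<and>
    down_closed_on (rect n m) box_pred L \<and> down_closed_on (rect n m) box_pred\<inverse>\<inverse> T \<and>
    fst \<alpha> - theta n m ` snd \<alpha> = L - T \<and> theta n m ` snd \<alpha> - fst \<alpha> = T - L"
    using \<beta> \<open>T \<subseteq> rect n m\<close> by blast
next
  assume "\<exists>L T. \<beta> = (L, theta n m ` T) \<and> L \<subseteq> rect n m \<and> T \<subseteq> rect n m \<and>
    down_closed_on (rect n m) box_pred L \<and> down_closed_on (rect n m) box_pred\<inverse>\<inverse> T \<and>
    fst \<alpha> - theta n m ` snd \<alpha> = L - T \<and> theta n m ` snd \<alpha> - fst \<alpha> = T - L"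
  then obtain L T where \<beta>: "\<beta> = (L, theta n m ` T)"
    and closed: "L \<subseteq> rect n m" "T \<subseteq> rect n m" "down_closed_on (rect n m) box_pred L"
      "down_closed_on (rect n m) box_pred\<inverse>\<inverse> T"
    and differences: "fst \<alpha> - theta n m ` snd \<alpha> = L - T" "theta n m ` snd \<alpha> - fst \<alpha> = T - L"
    by (elim exE conjE)
  have "\<beta> \<in> P_nm n m"
    unfolding \<beta> pair_theta_image_mem_P_nm_iff[OF closed(2)] using closed by blast
  moreover have "E_equiv k p0 \<alpha> \<beta>"
    unfolding E_equiv_iff_same_differences[OF hk p0 \<alpha> \<open>\<beta> \<in> P_nm n m\<close>]
    using differences theta_image_theta_image[OF closed(2)] by (simp add: \<beta>)
  ultimately show "\<beta> \<in> E_class k p0 \<alpha>"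
    by (simp add: E_class_def P_nm_def)
qed

lemma E_class_eq_fill_image:
  assumes hk: "k \<notin> \<rat>" and p0: "p0 = of_nat n + of_nat m / k" and \<alpha>: "\<alpha> \<in> P_nm n m"
  shows "E_class k p0 \<alpha> =
    fill n m \<alpha> ` {S. S \<subseteq> free_boxes n m \<alpha> \<and> down_closed_on (free_boxes n m \<alpha>) box_adj S}"
proof -
  define L T where "L = fst \<alpha>" and "T = theta n m ` snd \<alpha>"
  have "T \<subseteq> rect n m" "\<alpha> = (L, theta n m ` T)"
    using \<alpha> theta_snd_subset_rect by (auto simp: L_def T_def P_nm_def theta_image_theta_image)
  with \<alpha> have closed: "L \<subseteq> rect n m" "down_closed_on (rect n m) box_pred L"
    "down_closed_on (rect n m) box_pred\<inverse>\<inverse> T"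
    using pair_theta_image_mem_P_nm_iff by auto
  have "\<beta> \<in> E_class k p0 \<alpha> \<longleftrightarrow> (\<exists>L' T'. \<beta> = (L', theta n m ` T') \<and> (\<exists>S \<subseteq> free_boxes n m \<alpha>.
    down_closed_on (free_boxes n m \<alpha>) box_adj S \<and> L' = (L - T) \<union> S \<and> T' = (T - L) \<union> S))" for \<beta>
    unfolding mem_E_class_iff[OF hk p0 \<alpha>] L_def[symmetric] T_def[symmetric]
      down_up_closed_fixed_differences_iff[OF closed(1) \<open>T \<subseteq> rect n m\<close> closed(2,3)]
      down_closed_on_box_adj_iff
    by (simp add: free_boxes_def L_def T_def)
  then show ?thesis
    unfolding fill_def L_def[symmetric] T_def[symmetric] by blast
qed

lemma bij_betw_E_class:
  assumes hk: "k \<notin> \<rat>" and p0: "p0 = of_nat n + of_nat m / k" and \<alpha>: "\<alpha> \<in> P_nm n m"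
  shows "bij_betw (\<lambda>\<C>. fill n m \<alpha> (\<Union>\<C>)) (Pow (components (free_boxes n m \<alpha>))) (E_class k p0 \<alpha>)"
proof -
  have "bij_betw (fill n m \<alpha>)
      {S. S \<subseteq> free_boxes n m \<alpha> \<and> down_closed_on (free_boxes n m \<alpha>) box_adj S} (E_class k p0 \<alpha>)"
    unfolding E_class_eq_fill_image[OF hk p0 \<alpha>]
    by (rule bij_betw_imageI) (auto intro: inj_on_subset[OF inj_on_fill])
  then show ?thesis
    using bij_betw_trans[OF bij_betw_Union_components] by (simp add: comp_def)
qed

lemma fst_fill_inter_theta_snd_fill:
  assumes "\<alpha> \<in> P_nm n m" "S \<subseteq> free_boxes n m \<alpha>"
  shows "fst (fill n m \<alpha> S) \<inter> theta n m ` snd (fill n m \<alpha> S) = S"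
  using assms theta_snd_fill[OF assms] by (auto simp: fill_def free_boxes_def)

lemma fst_fill_union_theta_snd_fill:
  assumes "\<alpha> \<in> P_nm n m" "S \<subseteq> free_boxes n m \<alpha>"
  shows "fst (fill n m \<alpha> S) \<union> theta n m ` snd (fill n m \<alpha> S) = (rect n m - free_boxes n m \<alpha>) \<union> S"
proof -
  have "fst \<alpha> \<subseteq> rect n m" "theta n m ` snd \<alpha> \<subseteq> rect n m"
    using assms(1) theta_snd_subset_rect by (auto simp: P_nm_def)
  then show ?thesis
    using theta_snd_fill[OF assms] by (auto simp: fill_def free_boxes_def)
qed

lemma E_class_extremes:
  assumes hk: "k \<notin> \<rat>" and p0: "p0 = of_nat n + of_nat m / k" and \<alpha>: "\<alpha> \<in> P_nm n m"
  defines "E \<equiv> E_class k p0 \<alpha>" and "Z \<equiv> free_boxes n m \<alpha>"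
  shows "fill n m \<alpha> {} \<in> E \<and> fill n m \<alpha> Z \<in> E \<and>
    (\<forall>\<beta>\<in>E. bip_le (fill n m \<alpha> {}) \<beta> \<and> bip_le \<beta> (fill n m \<alpha> Z)) \<and>
    (\<forall>\<gamma>\<in>E. (\<gamma> = fill n m \<alpha> {} \<longleftrightarrow> fst \<gamma> \<inter> theta n m ` snd \<gamma> = {}) \<and>
             (\<gamma> = fill n m \<alpha> Z \<longleftrightarrow> fst \<gamma> \<union> theta n m ` snd \<gamma> = rect n m))"
proof -
  have E: "E = fill n m \<alpha> ` {S. S \<subseteq> Z \<and> down_closed_on Z box_adj S}"
    unfolding E_def Z_def by (rule E_class_eq_fill_image[OF hk p0 \<alpha>])
  then have "fill n m \<alpha> {} \<in> E" "fill n m \<alpha> Z \<in> E"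
    by (auto simp: down_closed_on_def)
  moreover have "\<forall>\<beta>\<in>E. bip_le (fill n m \<alpha> {}) \<beta> \<and> bip_le \<beta> (fill n m \<alpha> Z)"
    using E by (auto intro: fill_mono)
  moreover have "\<forall>\<gamma>\<in>E. (\<gamma> = fill n m \<alpha> {} \<longleftrightarrow> fst \<gamma> \<inter> theta n m ` snd \<gamma> = {}) \<and>
    (\<gamma> = fill n m \<alpha> Z \<longleftrightarrow> fst \<gamma> \<union> theta n m ` snd \<gamma> = rect n m)"
  proof
    fix \<gamma> assume "\<gamma> \<in> E"
    then obtain S where S: "S \<subseteq> Z" and \<gamma>: "\<gamma> = fill n m \<alpha> S"
      using E by blast
    have fill_eq_iff: "\<gamma> = fill n m \<alpha> S' \<longleftrightarrow> S = S'" if "S' \<subseteq> Z" for S'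
      using inj_onD[OF inj_on_fill, of n m \<alpha> S S'] S that by (auto simp: \<gamma> Z_def)
    have "Z \<subseteq> rect n m"
      by (simp add: Z_def free_boxes_subset_rect)
    with S have "(rect n m - Z) \<union> S = rect n m \<longleftrightarrow> S = Z"
      by blast
    then show "(\<gamma> = fill n m \<alpha> {} \<longleftrightarrow> fst \<gamma> \<inter> theta n m ` snd \<gamma> = {}) \<and>
      (\<gamma> = fill n m \<alpha> Z \<longleftrightarrow> fst \<gamma> \<union> theta n m ` snd \<gamma> = rect n m)"
      using fill_eq_iff[of "{}"] fill_eq_iff[of Z] S
        fst_fill_inter_theta_snd_fill[OF \<alpha>] fst_fill_union_theta_snd_fill[OF \<alpha>]
      by (simp add: \<gamma> Z_def)
  qed
  ultimately show ?thesis
    by blast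
qed

lemma fst_fill_diff:
  "S \<subseteq> free_boxes n m \<alpha> \<Longrightarrow> fst (fill n m \<alpha> S) - fst (fill n m \<alpha> {}) = S"
  by (auto simp: fill_def free_boxes_def)

lemma snd_fill_diff:
  assumes "\<alpha> \<in> P_nm n m" "S \<subseteq> free_boxes n m \<alpha>"
  shows "snd (fill n m \<alpha> S) - snd (fill n m \<alpha> {}) = theta n m ` S"
proof -
  define N where "N = theta n m ` snd \<alpha> - fst \<alpha>"
  have "N \<subseteq> rect n m"
    using theta_snd_subset_rect[OF assms(1)] by (auto simp: N_def)
  moreover have "S \<subseteq> rect n m"
    using assms(2) free_boxes_subset_rect by blast
  moreover have "(N \<union> S) - N = S"
    using assms(2) by (auto simp: N_def free_boxes_def)
  ultimately have "theta n m ` (N \<union> S) - theta n m ` N = theta n m ` S"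
    using inj_on_image_set_diff[OF bij_betw_imp_inj_on[OF bij_betw_theta], of "N \<union> S" N] by simp
  then show ?thesis
    by (simp add: fill_def N_def)
qed

lemma bij_betw_imp_ex1: "bij_betw f A B \<Longrightarrow> y \<in> B \<Longrightarrow> \<exists>!x. x \<in> A \<and> y = f x"
  by (metis bij_betw_def imageE inj_on_eq_iff)

lemma E_class_components:
  assumes hk: "k \<notin> \<rat>" and p0: "p0 = of_nat n + of_nat m / k" and \<alpha>: "\<alpha> \<in> P_nm n m"
  defines "E \<equiv> E_class k p0 \<alpha>" and "Z \<equiv> free_boxes n m \<alpha>"
  shows "\<exists>r::nat. \<exists>\<nu> \<tau> :: nat \<Rightarrow> box set.
    components (fst (fill n m \<alpha> Z) - fst (fill n m \<alpha> {})) = \<nu> ` {1..r} \<and> inj_on \<nu> {1..r} \<and>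
    components (snd (fill n m \<alpha> Z) - snd (fill n m \<alpha> {})) = \<tau> ` {1..r} \<and> inj_on \<tau> {1..r} \<and>
    (\<forall>i\<in>{1..r}. \<nu> i \<subseteq> rect n m \<and> \<tau> i \<subseteq> rect n m \<and> theta n m ` \<nu> i = \<tau> i) \<and>
    (\<forall>\<beta>\<in>E. \<exists>!A. A \<subseteq> {1..r} \<and> \<beta> = bip_union (fill n m \<alpha> {}) (\<Union>(\<nu> ` A), \<Union>(\<tau> ` A))) \<and>
    (\<forall>A. A \<subseteq> {1..r} \<longrightarrow> bip_union (fill n m \<alpha> {}) (\<Union>(\<nu> ` A), \<Union>(\<tau> ` A)) \<in> E) \<and>
    finite E \<and> card E = 2 ^ r"
proof -
  have "Z \<subseteq> rect n m"
    by (simp add: Z_def free_boxes_subset_rect)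
  then have "finite (components Z)"
    by (intro finite_components finite_subset[OF _ finite_rect])
  define r where "r = card (components Z)"
  obtain \<nu> where \<nu>: "bij_betw \<nu> {1..r} (components Z)"
    using ex_bij_betw_nat_finite_1[OF \<open>finite (components Z)\<close>] by (auto simp: r_def)
  define \<tau> where "\<tau> = (\<lambda>i. theta n m ` \<nu> i)"
  have \<tau>: "bij_betw \<tau> {1..r} (components (theta n m ` Z))"
    using bij_betw_trans[OF \<nu> bij_betw_image_theta_components[OF \<open>Z \<subseteq> rect n m\<close>]]
    by (simp add: \<tau>_def comp_def)
  have \<nu>_rect: "\<forall>i\<in>{1..r}. \<nu> i \<subseteq> rect n m \<and> \<tau> i \<subseteq> rect n m \<and> theta n m ` \<nu> i = \<tau> i"
  proof
    fix i assume "i \<in> {1..r}"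
    then have "\<nu> i \<subseteq> rect n m"
      using bij_betw_apply[OF \<nu>] component_subset \<open>Z \<subseteq> rect n m\<close> by blast
    then show "\<nu> i \<subseteq> rect n m \<and> \<tau> i \<subseteq> rect n m \<and> theta n m ` \<nu> i = \<tau> i"
      by (simp add: \<tau>_def theta_image_subset_rect)
  qed
  define f where "f = (\<lambda>A. fill n m \<alpha> (\<Union>(\<nu> ` A)))"
  have f_eq: "bip_union (fill n m \<alpha> {}) (\<Union>(\<nu> ` A), \<Union>(\<tau> ` A)) = f A" for A
    by (simp add: f_def bip_union_def fill_def \<tau>_def image_Un image_UN)
  have f: "bij_betw f (Pow {1..r}) E"
    using bij_betw_trans[OF bij_betw_Pow[OF \<nu>] bij_betw_E_class[OF hk p0 \<alpha>, folded Z_def E_def]]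
    by (simp add: f_def comp_def)
  have unique: "\<forall>\<beta>\<in>E. \<exists>!A. A \<subseteq> {1..r} \<and> \<beta> = f A"
    using bij_betw_imp_ex1[OF f] by simp
  have members: "\<forall>A. A \<subseteq> {1..r} \<longrightarrow> f A \<in> E"
    using bij_betw_apply[OF f] by blast
  have "finite E" "card E = 2 ^ r"
    using bij_betw_finite[OF f] bij_betw_same_card[OF f] card_Pow[of "{1..r}"] by simp_all
  show ?thesis
  proof (intro exI[where x = r], rule exI[where x = \<nu>], rule exI[where x = \<tau>])
  qed (use unique members \<open>finite E\<close> \<open>card E = 2 ^ r\<close> \<nu> \<tau> \<nu>_rect in
      \<open>simp add: f_eq fst_fill_diff snd_fill_diff[OF \<alpha>] Z_def bij_betw_def\<close>)
qed

theorem mainTheorem3: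
  fixes k :: complex and n m :: nat and \<alpha> :: bipart
  assumes hk: "k \<notin> \<rat>"
    and hn: "n > 0" and hm: "m > 0"
    and h\<alpha>: "\<alpha> \<in> P_nm n m"
  defines "p0 \<equiv> of_nat n + of_nat m / k"
  defines "E \<equiv> E_class k p0 \<alpha>"
  shows
    "E \<subseteq> P_nm n m \<and>
     (\<exists>\<alpha>m \<in> E. \<exists>\<alpha>M \<in> E.
        (\<forall>\<beta>\<in>E. bip_le \<alpha>m \<beta> \<and> bip_le \<beta> \<alpha>M) \<and>
        (\<forall>\<gamma>\<in>E. (\<gamma> = \<alpha>m \<longleftrightarrow> fst \<gamma> \<inter> theta n m ` snd \<gamma> = {}) \<and>
                 (\<gamma> = \<alpha>M \<longleftrightarrow> fst \<gamma> \<union> theta n m ` snd \<gamma> = rect n m)) \<and>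
        (\<exists>r::nat. \<exists>\<nu> \<tau> :: nat \<Rightarrow> box set.
           components (fst \<alpha>M - fst \<alpha>m) = \<nu> ` {1..r} \<and> inj_on \<nu> {1..r} \<and>
           components (snd \<alpha>M - snd \<alpha>m) = \<tau> ` {1..r} \<and> inj_on \<tau> {1..r} \<and>
           (\<forall>i\<in>{1..r}. \<nu> i \<subseteq> rect n m \<and> \<tau> i \<subseteq> rect n m \<and> theta n m ` \<nu> i = \<tau> i) \<and>
           (\<forall>\<beta>\<in>E. \<exists>!A. A \<subseteq> {1..r} \<and>
                \<beta> = bip_union \<alpha>m (\<Union>(\<nu> ` A), \<Union>(\<tau> ` A))) \<and>
           (\<forall>A. A \<subseteq> {1..r} \<longrightarrow> bip_union \<alpha>m (\<Union>(\<nu> ` A), \<Union>(\<tau> ` A)) \<in> E) \<and>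
           finite E \<and> card E = 2 ^ r))"
proof -
  have p0: "p0 = of_nat n + of_nat m / k"
    by (simp add: p0_def)
  let ?\<alpha>m = "fill n m \<alpha> {}" and ?\<alpha>M = "fill n m \<alpha> (free_boxes n m \<alpha>)"
  have "E \<subseteq> P_nm n m"
    unfolding E_def by (rule E_class_subset_P_nm[OF hk p0 h\<alpha>])
  obtain \<alpha>m_mem: "?\<alpha>m \<in> E" and \<alpha>M_mem: "?\<alpha>M \<in> E"
    and bounds: "\<forall>\<beta>\<in>E. bip_le ?\<alpha>m \<beta> \<and> bip_le \<beta> ?\<alpha>M"
    and characterization: "\<forall>\<gamma>\<in>E. (\<gamma> = ?\<alpha>m \<longleftrightarrow> fst \<gamma> \<inter> theta n m ` snd \<gamma> = {}) \<and>
      (\<gamma> = ?\<alpha>M \<longleftrightarrow> fst \<gamma> \<union> theta n m ` snd \<gamma> = rect n m)"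
    using E_class_extremes[OF hk p0 h\<alpha>] unfolding E_def by blast
  note decomposition = E_class_components[OF hk p0 h\<alpha>, folded E_def]
  show ?thesis
  proof (rule conjI[OF \<open>E \<subseteq> P_nm n m\<close>], rule bexI[OF _ \<alpha>m_mem], rule bexI[OF _ \<alpha>M_mem])
  qed (rule conjI[OF bounds conjI[OF characterization decomposition]])
qed

end
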